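(* Let $\epsilon>0$ and $k=b/((1+\epsilon)\ln b)$, and let $T_w=8(b+1)\ln b$. For the maximal one-step coupling $(X_t,Y_t)$ of the Glauber dynamics on proper $k$-colorings of the star graph $G^*$ started from any pair $(x_0,y_0)$, with probability tending to $1$ as $b\to\infty$ (uniformly over the initial pair), every leaf $\ell_i$ with $X_{T_w}(\ell_i)\ne Y_{T_w}(\ell_i)$ satisfies $X_{T_w}(\ell_i)=Y_{T_w}(r)$ and $Y_{T_w}(\ell_i)=X_{T_w}(r)$.
   Context: $G^*$: star graph with root $r$ and leaves $\ell_1,\dots,\ell_b$. Heat-bath Glauber dynamics for proper $k$-colorings: choose a uniform vertex $v$ and recolor it uniformly from its available colors $A_\sigma(v)=\{c: c\ne\sigma(u)\ \forall u\sim v\}$. The maximal one-step coupling: both chains choose the same uniformly random vertex $v$; for each $c\in A_{X_t}(v)\cap A_{Y_t}(v)$, with probability $1/\max\{|A_{X_t}(v)|,|A_{Y_t}(v)|\}$ both set $v$ to $c$; otherwise the colors are chosen from the correct marginals, coupled arbitrarily. *)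

theory Defs
  imports "HOL-Probability.Probability"
begin

text \<open>Star graph with b leaves: vertices 0..b, root = 0, leaves 1..b.
  Colours are 0..k-1. A colouring is a function nat => nat (only its values on
  the vertex set matter).\<close>

definition star_vertices :: "nat \<Rightarrow> nat set" where
  "star_vertices b = {0..b}"

definition star_adj :: "nat \<Rightarrow> nat \<Rightarrow> nat \<Rightarrow> bool" where
  "star_adj b u v \<longleftrightarrow> (u = 0 \<and> v \<in> {1..b}) \<or> (v = 0 \<and> u \<in> {1..b})"

definition proper_coloring :: "nat \<Rightarrow> nat \<Rightarrow> (nat \<Rightarrow> nat) \<Rightarrow> bool" where
  "proper_coloring b k \<sigma> \<longleftrightarrow>
     (\<forall>v\<in>star_vertices b. \<sigma> v < k) \<and>
     (\<forall>u\<in>star_vertices b. \<forall>v\<in>star_vertices b. star_adj b u v \<longrightarrow> \<sigma> u \<noteq> \<sigma> v)"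

definition avail :: "nat \<Rightarrow> nat \<Rightarrow> (nat \<Rightarrow> nat) \<Rightarrow> nat \<Rightarrow> nat set" where
  "avail b k \<sigma> v = {c \<in> {0..<k}. \<forall>u\<in>star_vertices b. star_adj b v u \<longrightarrow> c \<noteq> \<sigma> u}"

text \<open>A one-step colour coupling at vertex v for states x, y is a maximal one-step
  coupling: its marginals are uniform on the available colour sets, and each common
  available colour c is chosen by both with probability exactly 1/max(|A_x(v)|,|A_y(v)|).
  (The remaining mass is coupled arbitrarily.)\<close>
definition maximal_color_coupling ::
  "nat \<Rightarrow> nat \<Rightarrow> (nat \<Rightarrow> nat) \<Rightarrow> (nat \<Rightarrow> nat) \<Rightarrow> nat \<Rightarrow> (nat \<times> nat) pmf \<Rightarrow> bool" where
  "maximal_color_coupling b k x y v q \<longleftrightarrow>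
     map_pmf fst q = pmf_of_set (avail b k x v) \<and>
     map_pmf snd q = pmf_of_set (avail b k y v) \<and>
     (\<forall>c \<in> avail b k x v \<inter> avail b k y v.
        pmf q (c, c) = 1 / real (max (card (avail b k x v)) (card (avail b k y v))))"

definition maximal_coupling_choice ::
  "nat \<Rightarrow> nat \<Rightarrow> ((nat \<Rightarrow> nat) \<Rightarrow> (nat \<Rightarrow> nat) \<Rightarrow> nat \<Rightarrow> (nat \<times> nat) pmf) \<Rightarrow> bool" where
  "maximal_coupling_choice b k Q \<longleftrightarrow>
     (\<forall>x y. proper_coloring b k x \<longrightarrow> proper_coloring b k y \<longrightarrow>
        (\<forall>v\<in>star_vertices b. maximal_color_coupling b k x y v (Q x y v)))"

definition coupled_step ::
  "nat \<Rightarrow> ((nat \<Rightarrow> nat) \<Rightarrow> (nat \<Rightarrow> nat) \<Rightarrow> nat \<Rightarrow> (nat \<times> nat) pmf) \<Rightarrow>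
   (nat \<Rightarrow> nat) \<times> (nat \<Rightarrow> nat) \<Rightarrow> ((nat \<Rightarrow> nat) \<times> (nat \<Rightarrow> nat)) pmf" where
  "coupled_step b Q s =
     (case s of (x, y) \<Rightarrow>
       pmf_of_set (star_vertices b) \<bind> (\<lambda>v.
         map_pmf (\<lambda>(c, d). (x(v := c), y(v := d))) (Q x y v)))"

primrec coupled_dist ::
  "nat \<Rightarrow> ((nat \<Rightarrow> nat) \<Rightarrow> (nat \<Rightarrow> nat) \<Rightarrow> nat \<Rightarrow> (nat \<times> nat) pmf) \<Rightarrow>
   (nat \<Rightarrow> nat) \<Rightarrow> (nat \<Rightarrow> nat) \<Rightarrow> nat \<Rightarrow> ((nat \<Rightarrow> nat) \<times> (nat \<Rightarrow> nat)) pmf" where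
  "coupled_dist b Q x0 y0 0 = return_pmf (x0, y0)"
| "coupled_dist b Q x0 y0 (Suc t) = coupled_dist b Q x0 y0 t \<bind> coupled_step b Q"

definition num_colors :: "real \<Rightarrow> nat \<Rightarrow> nat" where
  "num_colors \<epsilon> b = nat \<lfloor>real b / ((1 + \<epsilon>) * ln (real b))\<rfloor>"

definition T_w :: "nat \<Rightarrow> nat" where
  "T_w b = nat \<lceil>8 * (real b + 1) * ln (real b)\<rceil>"

definition swap_event :: "nat \<Rightarrow> ((nat \<Rightarrow> nat) \<times> (nat \<Rightarrow> nat)) set" where
  "swap_event b = {(X, Y). \<forall>i\<in>{1..b}. X i \<noteq> Y i \<longrightarrow> X i = Y 0 \<and> Y i = X 0}"

end

theory Submission
  imports Defs "HOL-Real_Asymp.Real_Asymp"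
begin

text \<open>A coupled leaf update either makes the two leaf colours agree or swaps them with the two
  root colours: both chains may give the leaf every colour except their own root colour, and the
  maximal coupling puts the whole mass of each commonly available colour on the diagonal. The
  roots can only move while they are free, i.e. while some colour other than the root colour is
  missing from the leaves. Hence the number of bad leaves, truncated at 1, contracts by the
  factor b/(b+1) per step, up to an error 1/(b+1) at steps where a root is free.

  A recoloured leaf receives a given colour with probability 1/(k-1) \<ge> (1+\<epsilon>) ln b / b. The
  potential \<Sum>c \<theta>^(number of leaves of colour c), summed over the non-root colours, dominates the
  indicator of a free root at \<theta> = 0 and contracts by about 1 - (1 - \<theta>)(1+\<epsilon>) ln b / b per
  step, with \<theta> increasing towards 1 along a recursion. After C(b+1) steps a root is therefore
  free with probability O(k b^(-1-\<epsilon>/2)), and summing over the remaining O(b ln b) steps leaves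
  an error of order b^(-\<epsilon>/2).\<close>

lemma integrable_measure_pmf_bounded:
  fixes f :: "'a \<Rightarrow> real"
  assumes "\<And>x. \<bar>f x\<bar> \<le> B"
  shows "integrable (measure_pmf M) f"
  by (rule measure_pmf.integrable_const_bound[where B=B]) (auto simp: assms)

lemma expectation_bind_pmf:
  fixes f :: "'a \<Rightarrow> real"
  assumes "\<And>x. \<bar>f x\<bar> \<le> B"
  shows "measure_pmf.expectation (bind_pmf M N) f =
         measure_pmf.expectation M (\<lambda>x. measure_pmf.expectation (N x) f)"
  unfolding measure_pmf_bind
  by (rule integral_bind[where K="count_space UNIV" and B=B and B'=1])
     (auto simp: assms measure_pmf.emeasure_space_1 space_subprob_algebra
       intro!: prob_space_imp_subprob_space measure_pmf.prob_space_axioms AE_pmfI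
               prob_space.finite_measure)

lemma expectation_mono_on_support:
  fixes f g :: "'a \<Rightarrow> real"
  assumes "\<And>x. \<bar>f x\<bar> \<le> B" "\<And>x. \<bar>g x\<bar> \<le> B'" "\<And>x. x \<in> set_pmf M \<Longrightarrow> f x \<le> g x"
  shows "measure_pmf.expectation M f \<le> measure_pmf.expectation M g"
  by (rule integral_mono_AE) (auto intro!: integrable_measure_pmf_bounded assms AE_pmfI)

lemma expectation_le_on_support:
  fixes f :: "'a \<Rightarrow> real"
  assumes "\<And>x. \<bar>f x\<bar> \<le> B" "\<And>x. x \<in> set_pmf M \<Longrightarrow> f x \<le> c"
  shows "measure_pmf.expectation M f \<le> c"
  by (rule measure_pmf.integral_le_const)
     (auto intro!: integrable_measure_pmf_bounded[OF assms(1)] AE_pmfI assms(2))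

lemma abs_expectation_le:
  fixes f :: "'a \<Rightarrow> real"
  assumes "\<And>x. \<bar>f x\<bar> \<le> B"
  shows "\<bar>measure_pmf.expectation M f\<bar> \<le> B"
proof -
  have "\<bar>measure_pmf.expectation M f\<bar> \<le> measure_pmf.expectation M (\<lambda>x. \<bar>f x\<bar>)"
    by (rule integral_abs_bound)
  also have "\<dots> \<le> B"
    by (rule expectation_le_on_support[where B=B]) (use assms in auto)
  finally show ?thesis .
qed

lemma pmf_add_le_pmf_map:
  assumes "x \<noteq> y" "f x = c" "f y = c"
  shows "pmf q x + pmf q y \<le> pmf (map_pmf f q) c"
proof -
  have "pmf q x + pmf q y = measure_pmf.prob q {x, y}"
    using assms(1) by (simp add: measure_measure_pmf_finite)
  also have "\<dots> \<le> measure_pmf.prob q (f -` {c})"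
    using assms by (intro measure_pmf.finite_measure_mono) auto
  finally show ?thesis by (simp add: pmf_map)
qed

lemma add_power_ge_linear_term:
  fixes t d :: real
  assumes "0 \<le> t" "0 \<le> d"
  shows "t ^ m + real m * t ^ (m - 1) * d \<le> (t + d) ^ m"
proof (induction m)
  case 0 then show ?case by simp
next
  case (Suc m)
  have "t ^ Suc m + real (Suc m) * t ^ m * d \<le> (t + d) * (t ^ m + real m * t ^ (m - 1) * d)"
  proof (cases m)
    case (Suc n)
    then have "(t + d) * (t ^ m + real m * t ^ (m - 1) * d) =
        t ^ Suc m + real (Suc m) * t ^ m * d + real m * t ^ (m - 1) * d * d"
      by (simp add: algebra_simps)
    then show ?thesis using assms by simp
  qed (use assms in simp)
  also have "\<dots> \<le> (t + d) * (t + d) ^ m"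
    using Suc.IH assms by (intro mult_left_mono) auto
  finally show ?case by simp
qed

lemma one_minus_power_le_exp:
  fixes a :: real
  assumes "a \<le> 1"
  shows "(1 - a) ^ n \<le> exp (- (real n * a))"
proof -
  have "(1 - a) ^ n \<le> exp (- a) ^ n"
    using assms exp_ge_add_one_self[of "- a"] by (intro power_mono) auto
  then show ?thesis by (simp add: exp_of_nat_mult[symmetric])
qed

lemma sum_div_card_le:
  fixes g :: "'a \<Rightarrow> real"
  assumes "finite S" "S \<noteq> {}" "\<And>c. c \<in> S \<Longrightarrow> g c \<le> M"
  shows "(\<Sum>c\<in>S. g c) / real (card S) \<le> M"
proof -
  have "(\<Sum>c\<in>S. g c) \<le> real (card S) * M"
    using sum_mono[of S g "\<lambda>_. M"] assms(3) by simp
  moreover have "0 < card S" using assms(1,2) by (simp add: card_gt_0_iff)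
  ultimately show ?thesis by (simp add: divide_le_eq mult.commute)
qed

lemma real_nat_ceiling_le: "0 \<le> x \<Longrightarrow> real (nat \<lceil>x\<rceil>) \<le> x + 1"
  using ceiling_correct[of x] by simp

lemma one_le_Suc_mul_one_minus:
  fixes p :: real
  assumes "1 \<le> b" "p \<le> 1/2"
  shows "1 \<le> real (b + 1) * (1 - p)"
proof -
  have "2 * (1 / 2) \<le> real (b + 1) * (1 - p)"
    using assms by (intro mult_mono) auto
  then show ?thesis by simp
qed

lemma leaf_weight_sum_le:
  fixes p th :: real and b m :: nat
  assumes p: "0 < p" "p \<le> 1/2" and th: "0 \<le> th" "th \<le> 1" and m: "m \<le> b"
  defines "lam \<equiv> 1 - real b * p / real (b + 1) * (1 - th)"
  shows "th ^ m + real m * (p * th ^ m + (1 - p) * th ^ (m - 1))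
          + real (b - m) * (p * th ^ (m + 1) + (1 - p) * th ^ m)
         \<le> real (b + 1) * lam * (th + (1 - th) * ((1 - p) + p * th) / (real (b + 1) * lam)) ^ m"
proof -
  have bl: "real (b + 1) * lam = 1 + real b * (1 - p) + real b * p * th"
    unfolding lam_def by (simp add: field_simps)
  have lam_pos: "0 < real (b + 1) * lam"
    unfolding bl using p th by (simp add: add_pos_nonneg)
  \<comment> \<open>d is chosen so that the first-order term of (th + d)^m reproduces the left-hand side exactly\<close>
  define d where "d = (1 - th) * ((1 - p) + p * th) / (real (b + 1) * lam)"
  have "0 \<le> d" unfolding d_def using p th lam_pos by (intro divide_nonneg_pos) auto
  then have "th ^ m + real m * th ^ (m - 1) * d \<le> (th + d) ^ m"
    by (rule add_power_ge_linear_term[OF th(1)])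
  then have "real (b + 1) * lam * (th ^ m + real m * th ^ (m - 1) * d)
      \<le> real (b + 1) * lam * (th + d) ^ m"
    using lam_pos by (intro mult_left_mono) auto
  moreover have "real (b + 1) * lam * (th ^ m + real m * th ^ (m - 1) * d) =
      th ^ m + real m * (p * th ^ m + (1 - p) * th ^ (m - 1))
          + real (b - m) * (p * th ^ (m + 1) + (1 - p) * th ^ m)"
  proof -
    have dd: "real (b + 1) * lam * d = (1 - th) * ((1 - p) + p * th)"
      unfolding d_def using lam_pos by (simp add: field_simps)
    have "real (b + 1) * lam * (th ^ m + real m * th ^ (m - 1) * d) =
        (real (b + 1) * lam) * th ^ m + real m * th ^ (m - 1) * (real (b + 1) * lam * d)"
      by (simp add: algebra_simps)
    also have "\<dots> = (1 + real b * (1 - p) + real b * p * th) * th ^ m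
        + real m * th ^ (m - 1) * ((1 - th) * ((1 - p) + p * th))"
      unfolding dd unfolding bl ..
    also have "\<dots> = th ^ m + real m * (p * th ^ m + (1 - p) * th ^ (m - 1))
          + real (b - m) * (p * th ^ (m + 1) + (1 - p) * th ^ m)"
      using m by (cases m) (simp_all add: of_nat_diff algebra_simps)
    finally show ?thesis .
  qed
  ultimately show ?thesis unfolding d_def by linarith
qed

lemma sum_min_one_card_remove_le:
  fixes a :: real
  assumes "finite I" "S \<subseteq> I" "0 \<le> a"
  shows "min 1 (a * real (card S)) + (\<Sum>i\<in>I. min 1 (a * (real (card S) - of_bool (i \<in> S))))
         \<le> min (real (card I) + 1) (a * real (card I) * real (card S))"
proof -
  have "(\<Sum>i\<in>I. min 1 (a * (real (card S) - of_bool (i \<in> S)))) \<le> (\<Sum>i\<in>I. 1)"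
    by (rule sum_mono) simp
  moreover have "(\<Sum>i\<in>I. min 1 (a * (real (card S) - of_bool (i \<in> S))))
      \<le> (\<Sum>i\<in>I. a * (real (card S) - of_bool (i \<in> S)))"
    by (rule sum_mono) simp
  moreover have "(\<Sum>i\<in>I. of_bool (i \<in> S) :: real) = real (card S)"
    using assms(1,2) by (simp add: Int_absorb1 Int_def[symmetric])
  then have "(\<Sum>i\<in>I. a * (real (card S) - of_bool (i \<in> S))) = a * real (card I) * real (card S) - a * real (card S)"
    by (simp add: sum_subtractf sum_distrib_left[symmetric] algebra_simps)
  ultimately show ?thesis by (simp add: min_def)
qed

section \<open>Coupled Glauber dynamics on the star\<close>

locale star_coupling =
  fixes b k :: nat and Q :: "(nat \<Rightarrow> nat) \<Rightarrow> (nat \<Rightarrow> nat) \<Rightarrow> nat \<Rightarrow> (nat \<times> nat) pmf"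
  assumes one_le_b: "1 \<le> b" and three_le_k: "3 \<le> k"
    and maximal: "maximal_coupling_choice b k Q"
begin

abbreviation "V \<equiv> star_vertices b"
abbreviation "proper \<equiv> proper_coloring b k"
abbreviation "A \<equiv> avail b k"

lemma V_eq: "V = insert 0 {1..b}"
  by (auto simp: star_vertices_def)

lemma avail_root: "A x 0 = {d. d < k \<and> (\<forall>i\<in>{1..b}. d \<noteq> x i)}"
  unfolding avail_def star_vertices_def star_adj_def by auto

lemma avail_leaf: "i \<in> {1..b} \<Longrightarrow> A x i = {0..<k} - {x 0}"
  unfolding avail_def star_vertices_def star_adj_def by auto

lemma proper_root_less: "proper x \<Longrightarrow> x 0 < k"
  unfolding proper_coloring_def star_vertices_def by auto

lemma proper_iff: "proper x \<longleftrightarrow> x 0 < k \<and> (\<forall>i\<in>{1..b}. x i < k \<and> x i \<noteq> x 0)"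
proof -
  have "(\<forall>v\<in>V. x v < k) \<longleftrightarrow> x 0 < k \<and> (\<forall>i\<in>{1..b}. x i < k)"
    by (auto simp: V_eq)
  then show ?thesis
    unfolding proper_coloring_def by (auto simp: V_eq star_adj_def)
qed

lemma root_colour_avail: "proper x \<Longrightarrow> x 0 \<in> A x 0"
  by (auto simp: avail_root proper_iff)

lemma finite_avail: "finite (A x v)"
  unfolding avail_def by auto

lemma avail_nonempty: "proper x \<Longrightarrow> v \<in> V \<Longrightarrow> A x v \<noteq> {}"
proof -
  assume x: "proper x" and v: "v \<in> V"
  show ?thesis
  proof (cases "v = 0")
    case True then show ?thesis using root_colour_avail[OF x] by auto
  next
    case False
    then have "v \<in> {1..b}" using v by (auto simp: V_eq)
    moreover have "(if x 0 = 0 then 1 else 0) \<in> {0..<k} - {x 0}" using three_le_k by auto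
    ultimately show ?thesis by (auto simp: avail_leaf)
  qed
qed

lemma card_avail_leaf: "proper x \<Longrightarrow> i \<in> {1..b} \<Longrightarrow> card (A x i) = k - 1"
  using proper_root_less[of x] by (simp add: avail_leaf)

lemma proper_fun_upd:
  assumes "proper x" "v \<in> V" "c \<in> A x v"
  shows "proper (x(v := c))"
  using assms by (cases "v = 0") (auto simp: proper_iff avail_root avail_leaf V_eq)

lemma coupling_support_avail:
  assumes "proper x" "proper y" "v \<in> V" "(c, d) \<in> set_pmf (Q x y v)"
  shows "c \<in> A x v" "d \<in> A y v"
proof -
  have q: "maximal_color_coupling b k x y v (Q x y v)"
    using maximal assms unfolding maximal_coupling_choice_def by auto
  have "c \<in> set_pmf (map_pmf fst (Q x y v))" "d \<in> set_pmf (map_pmf snd (Q x y v))"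
    using assms(4) by force+
  then show "c \<in> A x v" "d \<in> A y v"
    using q avail_nonempty[OF assms(1,3)] avail_nonempty[OF assms(2,3)] finite_avail
    unfolding maximal_color_coupling_def by auto
qed

lemma set_pmf_coupled_step:
  "set_pmf (coupled_step b Q (x, y)) =
     (\<Union>v\<in>V. (\<lambda>(c, d). (x(v := c), y(v := d))) ` set_pmf (Q x y v))"
  by (auto simp: coupled_step_def star_vertices_def)

lemma proper_coupled_step:
  assumes "proper x" "proper y" "(x', y') \<in> set_pmf (coupled_step b Q (x, y))"
  shows "proper x'" "proper y'"
  using assms coupling_support_avail[OF assms(1,2)] proper_fun_upd
  by (auto simp: set_pmf_coupled_step)

lemma proper_coupled_dist:
  assumes "proper x0" "proper y0" "(x, y) \<in> set_pmf (coupled_dist b Q x0 y0 t)"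
  shows "proper x \<and> proper y"
  using assms(3)
proof (induction t arbitrary: x y)
  case (Suc t)
  then obtain x' y' where "(x', y') \<in> set_pmf (coupled_dist b Q x0 y0 t)"
    and "(x, y) \<in> set_pmf (coupled_step b Q (x', y'))"
    by auto
  then show ?case using Suc.IH proper_coupled_step by blast
qed (use assms in auto)

definition glauber_step :: "(nat \<Rightarrow> nat) \<Rightarrow> (nat \<Rightarrow> nat) pmf" where
  "glauber_step x = pmf_of_set V \<bind> (\<lambda>v. map_pmf (\<lambda>c. x(v := c)) (pmf_of_set (A x v)))"

lemma map_coupled_step:
  assumes "proper x" "proper y"
  shows "map_pmf fst (coupled_step b Q (x, y)) = glauber_step x"
    and "map_pmf snd (coupled_step b Q (x, y)) = glauber_step y"
proof -
  have marg: "map_pmf fst (Q x y v) = pmf_of_set (A x v)" "map_pmf snd (Q x y v) = pmf_of_set (A y v)"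
    if "v \<in> set_pmf (pmf_of_set V)" for v
    using that maximal assms
    by (auto simp: maximal_coupling_choice_def maximal_color_coupling_def star_vertices_def)
  have "map_pmf fst (coupled_step b Q (x, y)) =
      pmf_of_set V \<bind> (\<lambda>v. map_pmf (\<lambda>c. x(v := c)) (map_pmf fst (Q x y v)))"
    by (simp add: coupled_step_def map_bind_pmf pmf.map_comp o_def case_prod_beta)
  then show "map_pmf fst (coupled_step b Q (x, y)) = glauber_step x"
    unfolding glauber_step_def using marg(1) by (auto intro: bind_pmf_cong)
  have "map_pmf snd (coupled_step b Q (x, y)) =
      pmf_of_set V \<bind> (\<lambda>v. map_pmf (\<lambda>c. y(v := c)) (map_pmf snd (Q x y v)))"
    by (simp add: coupled_step_def map_bind_pmf pmf.map_comp o_def case_prod_beta)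
  then show "map_pmf snd (coupled_step b Q (x, y)) = glauber_step y"
    unfolding glauber_step_def using marg(2) by (auto intro: bind_pmf_cong)
qed

lemma leaf_update_agrees_or_swaps:
  assumes x: "proper x" and y: "proper y" and v: "v \<in> {1..b}"
    and cd: "(c, d) \<in> set_pmf (Q x y v)"
  shows "c = d \<or> (c = y 0 \<and> d = x 0)"
proof -
  define q where "q = Q x y v"
  have vV: "v \<in> V" using v by (auto simp: V_eq)
  have card: "card (A x v) = k - 1" "card (A y v) = k - 1"
    using card_avail_leaf x y v by auto
  have "maximal_color_coupling b k x y v q"
    using maximal x y vV unfolding maximal_coupling_choice_def q_def by auto
  then have marg: "map_pmf fst q = pmf_of_set (A x v)" "map_pmf snd q = pmf_of_set (A y v)"
    and diag: "\<And>c'. c' \<in> A x v \<inter> A y v \<Longrightarrow> pmf q (c', c') = 1 / real (k - 1)"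
    using card unfolding maximal_color_coupling_def by auto
  have full_diag: "pmf (map_pmf fst q) c' = pmf q (c', c')" "pmf (map_pmf snd q) c' = pmf q (c', c')"
    if "c' \<in> A x v \<inter> A y v" for c'
    using that diag[OF that] card avail_nonempty[OF x vV] avail_nonempty[OF y vV]
    by (simp_all add: marg pmf_of_set finite_avail)
  have on_diag: "c' = d'" if cd': "(c', d') \<in> set_pmf q"
    and common: "c' \<in> A x v \<inter> A y v \<or> d' \<in> A x v \<inter> A y v" for c' d'
  proof (rule ccontr)
    assume ne: "c' \<noteq> d'"
    have "pmf q (c', d') > 0" using cd' by (simp add: pmf_positive)
    moreover have "pmf q (c', c') + pmf q (c', d') \<le> pmf (map_pmf fst q) c'"
      "pmf q (d', d') + pmf q (c', d') \<le> pmf (map_pmf snd q) d'"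
      using ne by (auto intro!: pmf_add_le_pmf_map)
    ultimately show False using common full_diag by force
  qed
  have cA: "c \<in> A x v" and dA: "d \<in> A y v"
    using coupling_support_avail[OF x y vV cd] by auto
  show ?thesis
  proof (cases "c \<in> A y v")
    case True
    then show ?thesis using on_diag[of c d] cd cA unfolding q_def by auto
  next
    case False
    then have "c = y 0" "c \<noteq> d" using cA dA v by (auto simp: avail_leaf)
    moreover have "d \<notin> A x v" using on_diag[of c d] cd dA \<open>c \<noteq> d\<close> unfolding q_def by auto
    ultimately show ?thesis using dA v by (auto simp: avail_leaf)
  qed
qed

definition root_free :: "(nat \<Rightarrow> nat) \<Rightarrow> bool" where
  "root_free x \<longleftrightarrow> (\<exists>d<k. d \<noteq> x 0 \<and> (\<forall>i\<in>{1..b}. x i \<noteq> d))"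

lemma avail_root_not_free: "proper x \<Longrightarrow> \<not> root_free x \<Longrightarrow> A x 0 = {x 0}"
  using root_colour_avail[of x] unfolding root_free_def avail_root by auto

lemma root_update_not_free:
  assumes "proper x" "proper y" "(c, d) \<in> set_pmf (Q x y 0)"
  shows "\<not> root_free x \<Longrightarrow> c = x 0" and "\<not> root_free y \<Longrightarrow> d = y 0"
  using coupling_support_avail[OF assms(1,2) _ assms(3)] avail_root_not_free assms(1,2)
  by (auto simp: V_eq)

lemma expectation_coupled_step:
  fixes F :: "(nat \<Rightarrow> nat) \<times> (nat \<Rightarrow> nat) \<Rightarrow> real"
  assumes "\<And>s. \<bar>F s\<bar> \<le> B"
  shows "measure_pmf.expectation (coupled_step b Q (x, y)) F =
    (\<Sum>v\<in>V. measure_pmf.expectation (Q x y v) (\<lambda>(c, d). F (x(v := c), y(v := d)))) / real (b + 1)"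
proof -
  have "measure_pmf.expectation (coupled_step b Q (x, y)) F =
     measure_pmf.expectation (pmf_of_set V) (\<lambda>v. measure_pmf.expectation
        (map_pmf (\<lambda>(c, d). (x(v := c), y(v := d))) (Q x y v)) F)"
    unfolding coupled_step_def by (simp add: expectation_bind_pmf[OF assms])
  also have "\<dots> = (\<Sum>v\<in>V. measure_pmf.expectation
        (map_pmf (\<lambda>(c, d). (x(v := c), y(v := d))) (Q x y v)) F) / real (card V)"
    by (rule integral_pmf_of_set) (auto simp: star_vertices_def)
  finally show ?thesis by (simp add: star_vertices_def case_prod_unfold)
qed

lemma expectation_coupled_dist_Suc_le:
  fixes f g :: "(nat \<Rightarrow> nat) \<times> (nat \<Rightarrow> nat) \<Rightarrow> real"
  assumes "proper x0" "proper y0" "\<And>s. \<bar>f s\<bar> \<le> B" "\<And>s. \<bar>g s\<bar> \<le> B'"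
    and step: "\<And>x y. proper x \<Longrightarrow> proper y \<Longrightarrow>
                 measure_pmf.expectation (coupled_step b Q (x, y)) f \<le> g (x, y)"
  shows "measure_pmf.expectation (coupled_dist b Q x0 y0 (Suc t)) f
         \<le> measure_pmf.expectation (coupled_dist b Q x0 y0 t) g"
proof -
  have "measure_pmf.expectation (coupled_dist b Q x0 y0 (Suc t)) f =
      measure_pmf.expectation (coupled_dist b Q x0 y0 t)
        (\<lambda>s. measure_pmf.expectation (coupled_step b Q s) f)"
    by (simp add: expectation_bind_pmf[OF assms(3)])
  also have "\<dots> \<le> measure_pmf.expectation (coupled_dist b Q x0 y0 t) g"
  proof (rule expectation_mono_on_support)
    fix s assume "s \<in> set_pmf (coupled_dist b Q x0 y0 t)"
    then show "measure_pmf.expectation (coupled_step b Q s) f \<le> g s"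
      using proper_coupled_dist[OF assms(1,2)] step by (cases s) blast
  qed (use assms(3,4) abs_expectation_le in blast)+
  finally show ?thesis .
qed

subsection \<open>Disagreeing leaves\<close>

definition bad_leaves :: "(nat \<Rightarrow> nat) \<Rightarrow> (nat \<Rightarrow> nat) \<Rightarrow> nat set" where
  "bad_leaves x y = {i\<in>{1..b}. x i \<noteq> y i \<and> \<not> (x i = y 0 \<and> y i = x 0)}"

definition num_bad :: "(nat \<Rightarrow> nat) \<times> (nat \<Rightarrow> nat) \<Rightarrow> real" where
  "num_bad s = real (card (bad_leaves (fst s) (snd s)))"

lemma finite_bad_leaves: "finite (bad_leaves x y)"
  unfolding bad_leaves_def by auto

lemma num_bad_nonneg: "0 \<le> num_bad s"
  unfolding num_bad_def by simp

lemma num_bad_le: "num_bad s \<le> b"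
proof -
  have "card (bad_leaves (fst s) (snd s)) \<le> card {1..b}"
    by (rule card_mono) (auto simp: bad_leaves_def)
  then show ?thesis by (simp add: num_bad_def)
qed

lemma abs_min_one_num_bad_le: "0 \<le> a \<Longrightarrow> \<bar>min 1 (a * num_bad s)\<bar> \<le> 1"
  using num_bad_nonneg[of s] by (simp add: abs_le_iff)

lemma not_swap_event_num_bad: "s \<notin> swap_event b \<Longrightarrow> 1 \<le> num_bad s"
  using finite_bad_leaves
  by (cases s) (fastforce simp: swap_event_def num_bad_def bad_leaves_def Suc_le_eq card_gt_0_iff)

lemma num_bad_leaf_update:
  assumes "proper x" "proper y" "v \<in> {1..b}" "(c, d) \<in> set_pmf (Q x y v)"
  shows "num_bad (x(v := c), y(v := d)) \<le> num_bad (x, y) - of_bool (v \<in> bad_leaves x y)"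
proof -
  have "bad_leaves (x(v := c)) (y(v := d)) \<subseteq> bad_leaves x y - {v}"
    using leaf_update_agrees_or_swaps[OF assms] assms(3) by (auto simp: bad_leaves_def)
  then have "card (bad_leaves (x(v := c)) (y(v := d))) \<le> card (bad_leaves x y - {v})"
    by (intro card_mono) (simp_all add: finite_bad_leaves)
  moreover have "1 \<le> card (bad_leaves x y)" if "v \<in> bad_leaves x y"
    using that finite_bad_leaves by (metis One_nat_def Suc_leI card_gt_0_iff empty_iff)
  ultimately show ?thesis
    by (cases "v \<in> bad_leaves x y") (simp_all add: num_bad_def finite_bad_leaves of_nat_diff)
qed

lemma abs_min_one_num_bad_upd_le:
  "0 \<le> a \<Longrightarrow> \<bar>(\<lambda>(c, d). min 1 (a * num_bad (x(v := c), y(v := d)))) cd\<bar> \<le> 1"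
  using abs_min_one_num_bad_le by (simp add: case_prod_beta)

lemma expected_bad_leaf_update:
  assumes x: "proper x" and y: "proper y" and a: "0 \<le> a" and v: "v \<in> {1..b}"
  shows "measure_pmf.expectation (Q x y v) (\<lambda>(c, d). min 1 (a * num_bad (x(v := c), y(v := d))))
     \<le> min 1 (a * (num_bad (x, y) - of_bool (v \<in> bad_leaves x y)))"
proof (rule expectation_le_on_support[OF abs_min_one_num_bad_upd_le[OF a]])
  fix cd assume cd: "cd \<in> set_pmf (Q x y v)"
  obtain c d where [simp]: "cd = (c, d)" by (cases cd)
  have "a * num_bad (x(v := c), y(v := d)) \<le> a * (num_bad (x, y) - of_bool (v \<in> bad_leaves x y))"
    using num_bad_leaf_update[OF x y v] cd a by (intro mult_left_mono) auto
  then show "(\<lambda>(c, d). min 1 (a * num_bad (x(v := c), y(v := d)))) cd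
      \<le> min 1 (a * (num_bad (x, y) - of_bool (v \<in> bad_leaves x y)))"
    by simp
qed

text \<open>A root update may create many bad leaves at once; truncating the count at 1 keeps its
  contribution to at most 1, and only steps with a free root contribute at all.\<close>

lemma expected_bad_root_update:
  assumes x: "proper x" and y: "proper y" and a: "0 \<le> a"
  shows "measure_pmf.expectation (Q x y 0) (\<lambda>(c, d). min 1 (a * num_bad (x(0 := c), y(0 := d))))
     \<le> min 1 (a * num_bad (x, y)) + of_bool (root_free x \<or> root_free y)"
proof (cases "root_free x \<or> root_free y")
  case True
  have "measure_pmf.expectation (Q x y 0) (\<lambda>(c, d). min 1 (a * num_bad (x(0 := c), y(0 := d)))) \<le> 1"
    by (rule expectation_le_on_support[OF abs_min_one_num_bad_upd_le[OF a]]) (auto simp: case_prod_beta)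
  moreover have "0 \<le> min 1 (a * num_bad (x, y))" using num_bad_nonneg[of "(x, y)"] a by simp
  ultimately show ?thesis using True by simp
next
  case False
  have "measure_pmf.expectation (Q x y 0) (\<lambda>(c, d). min 1 (a * num_bad (x(0 := c), y(0 := d))))
      \<le> min 1 (a * num_bad (x, y))"
    by (rule expectation_le_on_support[OF abs_min_one_num_bad_upd_le[OF a]])
       (use root_update_not_free[OF x y] False in \<open>auto simp: fun_upd_idem\<close>)
  then show ?thesis using False by simp
qed

lemma expected_bad_step:
  assumes x: "proper x" and y: "proper y" and a: "0 \<le> a"
  shows "measure_pmf.expectation (coupled_step b Q (x, y)) (\<lambda>s. min 1 (a * num_bad s))
     \<le> min 1 (a * (real b / real (b + 1)) * num_bad (x, y))
        + of_bool (root_free x \<or> root_free y) / real (b + 1)"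
proof -
  let ?E = "\<lambda>v. measure_pmf.expectation (Q x y v)
              (\<lambda>(c, d). min 1 (a * num_bad (x(v := c), y(v := d))))"
  let ?N = "num_bad (x, y)" and ?S = "bad_leaves x y"
  let ?free = "of_bool (root_free x \<or> root_free y) :: real"
  have "(\<Sum>v\<in>V. ?E v) = ?E 0 + (\<Sum>v\<in>{1..b}. ?E v)"
    by (simp add: V_eq)
  also have "\<dots> \<le> min 1 (a * ?N) + (\<Sum>v\<in>{1..b}. min 1 (a * (?N - of_bool (v \<in> ?S)))) + ?free"
    using expected_bad_root_update[OF x y a]
      sum_mono[of "{1..b}" ?E, OF expected_bad_leaf_update[OF x y a]] by linarith
  also have "\<dots> \<le> min (real b + 1) (a * real b * ?N) + ?free"
  proof -
    have "?S \<subseteq> {1..b}" unfolding bad_leaves_def by auto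
    from sum_min_one_card_remove_le[OF finite_atLeastAtMost this a]
    show ?thesis
      unfolding num_bad_def fst_conv snd_conv card_atLeastAtMost diff_Suc_1 by linarith
  qed
  finally have "(\<Sum>v\<in>V. ?E v) / real (b + 1) \<le> (min (real b + 1) (a * real b * ?N) + ?free) / real (b + 1)"
    by (intro divide_right_mono) auto
  also have "\<dots> = min 1 (a * (real b / real (b + 1)) * ?N) + ?free / real (b + 1)"
  proof -
    have "min (real b + 1) (a * real b * ?N) / real (b + 1) = min 1 (a * (real b / real (b + 1)) * ?N)"
      by (simp add: min_def divide_le_eq le_divide_eq)
    then show ?thesis by (simp add: add_divide_distrib)
  qed
  finally show ?thesis
    by (simp add: expectation_coupled_step[OF abs_min_one_num_bad_le[OF a]])
qed

abbreviation either_root_free :: "(nat \<Rightarrow> nat) \<times> (nat \<Rightarrow> nat) \<Rightarrow> real" where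
  "either_root_free s \<equiv> of_bool (root_free (fst s) \<or> root_free (snd s))"

lemma expected_bad_iter:
  assumes x0: "proper x0" and y0: "proper y0" and a: "0 \<le> a"
  shows "measure_pmf.expectation (coupled_dist b Q x0 y0 (t + j)) (\<lambda>s. min 1 (a * num_bad s))
     \<le> measure_pmf.expectation (coupled_dist b Q x0 y0 t)
          (\<lambda>s. min 1 (a * (real b / real (b + 1)) ^ j * num_bad s))
       + (\<Sum>i<j. measure_pmf.expectation (coupled_dist b Q x0 y0 (t + i)) either_root_free)
          / real (b + 1)"
  using a
proof (induction j arbitrary: a)
  case (Suc j)
  let ?D = "coupled_dist b Q x0 y0" and ?r = "real b / real (b + 1)"
  have ar: "0 \<le> a * ?r" using Suc.prems by simp
  have bounded: "\<bar>min 1 (a * ?r * num_bad s) + either_root_free s / real (b + 1)\<bar> \<le> 2" for s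
  proof -
    have "0 \<le> either_root_free s / real (b + 1)" "either_root_free s / real (b + 1) \<le> 1"
      by auto
    then show ?thesis
      using abs_min_one_num_bad_le[OF ar, of s] by (simp only: abs_le_iff) linarith
  qed
  have "measure_pmf.expectation (?D (Suc (t + j))) (\<lambda>s. min 1 (a * num_bad s))
      \<le> measure_pmf.expectation (?D (t + j))
           (\<lambda>s. min 1 (a * ?r * num_bad s) + either_root_free s / real (b + 1))"
    by (rule expectation_coupled_dist_Suc_le[OF x0 y0 abs_min_one_num_bad_le[OF Suc.prems] bounded])
       (use expected_bad_step Suc.prems in auto)
  also have "\<dots> = measure_pmf.expectation (?D (t + j)) (\<lambda>s. min 1 (a * ?r * num_bad s))
      + measure_pmf.expectation (?D (t + j)) either_root_free / real (b + 1)"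
    using integrable_measure_pmf_bounded[OF abs_min_one_num_bad_le[OF ar]]
    by (subst Bochner_Integration.integral_add)
       (auto intro: integrable_measure_pmf_bounded[where B=1])
  also have "\<dots> \<le> measure_pmf.expectation (?D t) (\<lambda>s. min 1 (a * ?r * ?r ^ j * num_bad s))
      + (\<Sum>i<j. measure_pmf.expectation (?D (t + i)) either_root_free) / real (b + 1)
      + measure_pmf.expectation (?D (t + j)) either_root_free / real (b + 1)"
    using Suc.IH[OF ar] by simp
  finally show ?case by (simp add: add_divide_distrib mult.assoc)
qed simp

lemma prob_swap_event_ge:
  assumes "proper x0" "proper y0"
  shows "measure_pmf.prob (coupled_dist b Q x0 y0 (t + j)) (swap_event b)
     \<ge> 1 - (real b / real (b + 1)) ^ j * real b
       - (\<Sum>i<j. measure_pmf.expectation (coupled_dist b Q x0 y0 (t + i)) either_root_free)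
          / real (b + 1)"
proof -
  let ?D = "coupled_dist b Q x0 y0" and ?r = "real b / real (b + 1)"
  have "1 - measure_pmf.prob (?D (t + j)) (swap_event b)
      = measure_pmf.expectation (?D (t + j)) (indicator (- swap_event b))"
    by (simp add: measure_pmf.prob_compl[symmetric] Compl_eq_Diff_UNIV)
  also have "\<dots> \<le> measure_pmf.expectation (?D (t + j)) (\<lambda>s. min 1 (1 * num_bad s))"
    by (rule expectation_mono_on_support[where B=1 and B'=1])
       (auto simp: indicator_def num_bad_nonneg not_swap_event_num_bad)
  also have "\<dots> \<le> measure_pmf.expectation (?D t) (\<lambda>s. min 1 (1 * ?r ^ j * num_bad s))
      + (\<Sum>i<j. measure_pmf.expectation (?D (t + i)) either_root_free) / real (b + 1)"
    by (rule expected_bad_iter[OF assms]) simp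
  also have "measure_pmf.expectation (?D t) (\<lambda>s. min 1 (1 * ?r ^ j * num_bad s)) \<le> ?r ^ j * real b"
    by (rule expectation_le_on_support[where B=1])
       (auto simp: abs_le_iff num_bad_nonneg num_bad_le min.coboundedI2 mult_left_mono)
  finally show ?thesis by simp
qed

subsection \<open>Free roots\<close>

definition leaf_count :: "(nat \<Rightarrow> nat) \<Rightarrow> nat \<Rightarrow> nat" where
  "leaf_count x c = card {i\<in>{1..b}. x i = c}"

text \<open>Since 0^0 = 1, the potential at 0 counts the colours other than the root colour that are
  missing from the leaves; raising the parameter tracks how fast the colour classes fill up.\<close>

definition colour_weight :: "real \<Rightarrow> (nat \<Rightarrow> nat) \<Rightarrow> nat \<Rightarrow> real" where
  "colour_weight th x c = (if x 0 \<noteq> c then th ^ leaf_count x c else 0)"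

definition free_potential :: "real \<Rightarrow> (nat \<Rightarrow> nat) \<Rightarrow> real" where
  "free_potential th x = (\<Sum>c<k. colour_weight th x c)"

text \<open>A recoloured leaf receives a given non-root colour with probability p_leaf. Given \<theta>, the
  value next_theta \<theta> is the one for which a Glauber step maps the weight \<theta>^m of a colour class of
  size m to at most contraction \<theta> \<cdot> (next_theta \<theta>)^m in expectation (see leaf_weight_sum_le).\<close>

definition p_leaf :: real where
  "p_leaf = 1 / real (k - 1)"

definition contraction :: "real \<Rightarrow> real" where
  "contraction th = 1 - real b * p_leaf / real (b + 1) * (1 - th)"

definition next_theta :: "real \<Rightarrow> real" where
  "next_theta th = th + (1 - th) * ((1 - p_leaf) + p_leaf * th) / (real (b + 1) * contraction th)"

primrec theta :: "nat \<Rightarrow> real" where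
  "theta 0 = 0"
| "theta (Suc j) = next_theta (theta j)"

lemma p_leaf_pos: "0 < p_leaf" and p_leaf_le_half: "p_leaf \<le> 1/2"
  using three_le_k by (auto simp: p_leaf_def field_simps)

lemma leaf_count_le: "leaf_count x c \<le> b"
proof -
  have "card {i\<in>{1..b}. x i = c} \<le> card {1..b}" by (rule card_mono) auto
  then show ?thesis by (simp add: leaf_count_def)
qed

lemma leaf_count_upd_root: "leaf_count (x(0 := c')) c = leaf_count x c"
  unfolding leaf_count_def by (rule arg_cong[where f=card]) auto

lemma leaf_count_upd_leaf:
  assumes v: "v \<in> {1..b}"
  shows "leaf_count (x(v := c')) c = of_bool (c' = c) + (leaf_count x c - of_bool (x v = c))"
proof -
  define S where "S = {i\<in>{1..b}. x i = c} - {v}"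
  have "finite S" "v \<notin> S" unfolding S_def by auto
  moreover have "{i\<in>{1..b}. (x(v := c')) i = c} = (if c' = c then insert v S else S)"
    using v unfolding S_def by auto
  moreover have "card S = leaf_count x c - of_bool (x v = c)"
    using v unfolding leaf_count_def S_def by (simp add: card_Diff_singleton_if)
  ultimately show ?thesis
    unfolding leaf_count_def[of "x(v := c')"] by simp
qed

lemma colour_weight_nonneg: "0 \<le> th \<Longrightarrow> 0 \<le> colour_weight th x c"
  unfolding colour_weight_def by simp

lemma colour_weight_le_one: "0 \<le> th \<Longrightarrow> th \<le> 1 \<Longrightarrow> colour_weight th x c \<le> 1"
  unfolding colour_weight_def by (simp add: power_le_one)

lemma abs_colour_weight_le: "0 \<le> th \<Longrightarrow> th \<le> 1 \<Longrightarrow> \<bar>colour_weight th x c\<bar> \<le> 1"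
  using colour_weight_nonneg colour_weight_le_one by (simp add: abs_le_iff)

lemma expectation_glauber_step:
  fixes f :: "(nat \<Rightarrow> nat) \<Rightarrow> real"
  assumes x: "proper x" and bounded: "\<And>z. \<bar>f z\<bar> \<le> B"
  shows "measure_pmf.expectation (glauber_step x) f =
    (\<Sum>v\<in>V. (\<Sum>c\<in>A x v. f (x(v := c))) / real (card (A x v))) / real (b + 1)"
proof -
  have "measure_pmf.expectation (glauber_step x) f =
     measure_pmf.expectation (pmf_of_set V)
       (\<lambda>v. measure_pmf.expectation (pmf_of_set (A x v)) (\<lambda>c. f (x(v := c))))"
    unfolding glauber_step_def by (simp add: expectation_bind_pmf[OF bounded])
  also have "\<dots> = (\<Sum>v\<in>V. measure_pmf.expectation (pmf_of_set (A x v)) (\<lambda>c. f (x(v := c))))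
      / real (card V)"
    by (rule integral_pmf_of_set) (auto simp: star_vertices_def)
  also have "\<dots> = (\<Sum>v\<in>V. (\<Sum>c\<in>A x v. f (x(v := c))) / real (card (A x v))) / real (card V)"
    using avail_nonempty[OF x] finite_avail by (intro arg_cong2[where f="(/)"] sum.cong refl)
       (simp add: integral_pmf_of_set)
  finally show ?thesis by (simp add: star_vertices_def)
qed

lemma average_colour_weight_leaf:
  assumes x: "proper x" and c: "c < k" "x 0 \<noteq> c" and v: "v \<in> {1..b}"
  defines "m \<equiv> leaf_count x c - of_bool (x v = c)"
  shows "(\<Sum>c'\<in>A x v. colour_weight th (x(v := c')) c) / real (card (A x v))
         = p_leaf * th ^ (m + 1) + (1 - p_leaf) * th ^ m"
proof -
  have cA: "c \<in> A x v" using avail_leaf[OF v] c by auto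
  have card: "card (A x v) = k - 1" by (rule card_avail_leaf[OF x v])
  have weight: "colour_weight th (x(v := c')) c = th ^ (of_bool (c' = c) + m)" for c'
    using v c by (simp add: colour_weight_def leaf_count_upd_leaf m_def)
  have "(\<Sum>c'\<in>A x v. colour_weight th (x(v := c')) c)
      = colour_weight th (x(v := c)) c + (\<Sum>c'\<in>A x v - {c}. colour_weight th (x(v := c')) c)"
    using cA finite_avail by (simp add: sum.remove)
  also have "\<dots> = th ^ (m + 1) + real (k - 2) * th ^ m"
    using cA card finite_avail by (simp add: weight card_Diff_singleton numeral_2_eq_2)
  finally have sum: "(\<Sum>c'\<in>A x v. colour_weight th (x(v := c')) c)
      = th ^ (m + 1) + (real (k - 1) - 1) * th ^ m"
    using three_le_k by (simp add: of_nat_diff)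
  define K where "K = real (k - 1)"
  have "0 < K" using three_le_k by (simp add: K_def)
  then have "(th ^ (m + 1) + (K - 1) * th ^ m) / K = 1 / K * th ^ (m + 1) + (1 - 1 / K) * th ^ m"
    by (simp add: field_simps)
  then show ?thesis
    unfolding sum card p_leaf_def K_def[symmetric] .
qed

lemma sum_average_colour_weight_leaves:
  assumes x: "proper x" and c: "c < k" "x 0 \<noteq> c"
  defines "m \<equiv> leaf_count x c"
  shows "(\<Sum>v\<in>{1..b}. (\<Sum>c'\<in>A x v. colour_weight th (x(v := c')) c) / real (card (A x v)))
     = real m * (p_leaf * th ^ m + (1 - p_leaf) * th ^ (m - 1))
       + real (b - m) * (p_leaf * th ^ (m + 1) + (1 - p_leaf) * th ^ m)"
proof -
  define S where "S = {v\<in>{1..b}. x v = c}"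
  have S: "S \<subseteq> {1..b}" "finite S" and card_S: "card S = m"
    unfolding S_def m_def leaf_count_def by auto
  have card_rest: "card ({1..b} - S) = b - m"
    using card_Diff_subset[OF S(2,1)] card_S by simp
  have "(\<Sum>v\<in>{1..b}. (\<Sum>c'\<in>A x v. colour_weight th (x(v := c')) c) / real (card (A x v)))
      = (\<Sum>v\<in>{1..b}. if v \<in> S then p_leaf * th ^ m + (1 - p_leaf) * th ^ (m - 1)
                      else p_leaf * th ^ (m + 1) + (1 - p_leaf) * th ^ m)"
  proof (rule sum.cong[OF refl])
    fix v assume v: "v \<in> {1..b}"
    show "(\<Sum>c'\<in>A x v. colour_weight th (x(v := c')) c) / real (card (A x v))
        = (if v \<in> S then p_leaf * th ^ m + (1 - p_leaf) * th ^ (m - 1)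
           else p_leaf * th ^ (m + 1) + (1 - p_leaf) * th ^ m)"
    proof (cases "v \<in> S")
      case True
      then have "Suc (m - 1) = m"
        using S card_S card_gt_0_iff[of S] by auto
      then have "th * th ^ (m - 1) = th ^ m"
        by (metis power_Suc)
      then show ?thesis
        using average_colour_weight_leaf[OF x c v, of th] True by (simp add: S_def m_def)
    next
      case False
      then show ?thesis using average_colour_weight_leaf[OF x c v, of th] v by (simp add: S_def m_def)
    qed
  qed
  also have "\<dots> = real m * (p_leaf * th ^ m + (1 - p_leaf) * th ^ (m - 1))
       + real (b - m) * (p_leaf * th ^ (m + 1) + (1 - p_leaf) * th ^ m)"
    using S card_S card_rest by (simp add: sum.If_cases Int_absorb1 Int_absorb2 Diff_eq[symmetric])
  finally show ?thesis .
qed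

lemma average_colour_weight_root_le:
  assumes x: "proper x" and th: "0 \<le> th" "th \<le> 1"
  shows "(\<Sum>c'\<in>A x 0. colour_weight th (x(0 := c')) c) / real (card (A x 0))
     \<le> (if x 0 = c then of_bool (root_free x) else th ^ leaf_count x c)"
proof -
  have avail: "finite (A x 0)" "A x 0 \<noteq> {}"
    using finite_avail avail_nonempty[OF x] by (auto simp: V_eq)
  show ?thesis
  proof (cases "x 0 = c \<and> \<not> root_free x")
    case True
    then show ?thesis
      using avail_root_not_free[OF x] by (simp add: colour_weight_def)
  next
    case False
    then show ?thesis
      using th by (intro sum_div_card_le[OF avail])
        (auto simp: colour_weight_def leaf_count_upd_root power_le_one)
  qed
qed

lemma expected_colour_weight_step:
  assumes x: "proper x" and c: "c < k" and th: "0 \<le> th" "th \<le> 1"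
  shows "measure_pmf.expectation (glauber_step x) (\<lambda>z. colour_weight th z c)
     \<le> contraction th * colour_weight (next_theta th) x c
       + of_bool (x 0 = c \<and> root_free x) / real (b + 1)"
proof -
  let ?avg = "\<lambda>v. (\<Sum>c'\<in>A x v. colour_weight th (x(v := c')) c) / real (card (A x v))"
  have E: "measure_pmf.expectation (glauber_step x) (\<lambda>z. colour_weight th z c)
      = (?avg 0 + (\<Sum>v\<in>{1..b}. ?avg v)) / real (b + 1)"
    using expectation_glauber_step[OF x abs_colour_weight_le[OF th]] by (simp add: V_eq)
  note root = average_colour_weight_root_le[OF x th, of c]
  show ?thesis
  proof (cases "x 0 = c")
    case True
    have "(\<Sum>v\<in>{1..b}. ?avg v) = 0"
      using True by (simp add: colour_weight_def)
    then have "(?avg 0 + (\<Sum>v\<in>{1..b}. ?avg v)) / real (b + 1) \<le> of_bool (root_free x) / real (b + 1)"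
      using root True by (intro divide_right_mono) auto
    then show ?thesis
      using True unfolding E by (simp add: colour_weight_def)
  next
    case False
    define m where "m = leaf_count x c"
    have "?avg 0 + (\<Sum>v\<in>{1..b}. ?avg v) \<le> real (b + 1) * contraction th * next_theta th ^ m"
      using root False sum_average_colour_weight_leaves[OF x c False, of th]
        leaf_weight_sum_le[OF p_leaf_pos p_leaf_le_half th leaf_count_le[of x c]]
      unfolding contraction_def next_theta_def m_def by simp
    then show ?thesis
      using False unfolding E by (simp add: colour_weight_def m_def divide_le_eq mult_ac)
  qed
qed

lemma free_potential_nonneg: "0 \<le> th \<Longrightarrow> 0 \<le> free_potential th x"
  unfolding free_potential_def by (intro sum_nonneg colour_weight_nonneg)

lemma abs_free_potential_le: "0 \<le> th \<Longrightarrow> th \<le> 1 \<Longrightarrow> \<bar>free_potential th x\<bar> \<le> real k"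
  using sum_mono[of "{..<k}" "colour_weight th x" "\<lambda>_. 1"] colour_weight_le_one
    free_potential_nonneg[of th x]
  by (simp add: free_potential_def)

lemma root_free_le_free_potential:
  assumes "0 \<le> th"
  shows "of_bool (root_free x) \<le> free_potential th x"
proof (cases "root_free x")
  case True
  then obtain d where d: "d < k" "d \<noteq> x 0" "\<forall>i\<in>{1..b}. x i \<noteq> d"
    unfolding root_free_def by auto
  then have "{i\<in>{1..b}. x i = d} = {}" by auto
  then have "leaf_count x d = 0" unfolding leaf_count_def by (simp only: card.empty)
  then have "colour_weight th x d = 1" using d(2) by (simp add: colour_weight_def)
  moreover have "colour_weight th x d \<le> free_potential th x"
    unfolding free_potential_def using d(1) assms
    by (intro member_le_sum colour_weight_nonneg) auto
  ultimately show ?thesis using True by simp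
qed (simp add: free_potential_nonneg[OF assms])

lemma contraction_ge: "0 \<le> th \<Longrightarrow> th \<le> 1 \<Longrightarrow> 1 - p_leaf \<le> contraction th"
proof -
  assume th: "0 \<le> th" "th \<le> 1"
  have "real b * p_leaf / real (b + 1) * (1 - th) \<le> p_leaf * 1"
    using p_leaf_pos th by (intro mult_mono) (auto simp: field_simps)
  then show ?thesis unfolding contraction_def by linarith
qed

lemma contraction_pos: "0 \<le> th \<Longrightarrow> th \<le> 1 \<Longrightarrow> 0 < contraction th"
  using contraction_ge p_leaf_le_half by fastforce

lemma next_theta_bounds:
  assumes th: "0 \<le> th" "th \<le> 1"
  shows "th \<le> next_theta th" "next_theta th \<le> 1"
    and "(1 - th) * (1 - 1 / (real (b + 1) * (1 - p_leaf))) \<le> 1 - next_theta th"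
proof -
  define r where "r = ((1 - p_leaf) + p_leaf * th) / (real (b + 1) * contraction th)"
  have num: "0 \<le> (1 - p_leaf) + p_leaf * th" "(1 - p_leaf) + p_leaf * th \<le> 1"
    using p_leaf_pos p_leaf_le_half th by (auto simp: mult_le_one)
  have den: "1 - p_leaf \<le> contraction th" "0 < real (b + 1) * (1 - p_leaf)"
    using contraction_ge[OF th] p_leaf_le_half by auto
  have "real (b + 1) * (1 - p_leaf) \<le> real (b + 1) * contraction th"
    using den by (intro mult_left_mono) auto
  then have r_le: "r \<le> 1 / (real (b + 1) * (1 - p_leaf))"
    unfolding r_def using num den by (intro frac_le) auto
  have r_nonneg: "0 \<le> r"
    unfolding r_def using num contraction_pos[OF th] by simp
  have "1 / (real (b + 1) * (1 - p_leaf)) \<le> 1"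
    using one_le_Suc_mul_one_minus[OF one_le_b p_leaf_le_half] by simp
  then have "(1 - th) * r \<le> (1 - th) * 1"
    using r_le th by (intro mult_left_mono) auto
  then have le1: "(1 - th) * r \<le> 1 - th" by simp
  have le_g: "(1 - th) * r \<le> (1 - th) * (1 / (real (b + 1) * (1 - p_leaf)))"
    using r_le th by (intro mult_left_mono) auto
  have nx: "next_theta th = th + (1 - th) * r"
    unfolding next_theta_def r_def by simp
  have "0 \<le> (1 - th) * r" using th r_nonneg by simp
  then show "th \<le> next_theta th" unfolding nx by linarith
  show "next_theta th \<le> 1" using le1 unfolding nx by linarith
  show "(1 - th) * (1 - 1 / (real (b + 1) * (1 - p_leaf))) \<le> 1 - next_theta th"
    using le_g unfolding nx by (simp add: right_diff_distrib)
qed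

lemma theta_bounds: "0 \<le> theta j" "theta j \<le> 1"
proof (induction j)
  case (Suc j)
  then show "0 \<le> theta (Suc j)" "theta (Suc j) \<le> 1"
    using next_theta_bounds[of "theta j"] by auto
qed simp_all

lemma expected_potential_step:
  assumes x: "proper x" and th: "0 \<le> th" "th \<le> 1"
  shows "measure_pmf.expectation (glauber_step x) (free_potential th)
     \<le> (contraction th + 1 / real (b + 1)) * free_potential (next_theta th) x"
proof -
  have "measure_pmf.expectation (glauber_step x) (free_potential th) =
      (\<Sum>c<k. measure_pmf.expectation (glauber_step x) (\<lambda>z. colour_weight th z c))"
    unfolding free_potential_def
    by (rule Bochner_Integration.integral_sum)
       (rule integrable_measure_pmf_bounded[OF abs_colour_weight_le[OF th]])
  also have "\<dots> \<le> (\<Sum>c<k. contraction th * colour_weight (next_theta th) x c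
                       + of_bool (x 0 = c \<and> root_free x) / real (b + 1))"
    using expected_colour_weight_step[OF x _ th] by (intro sum_mono) simp
  also have "\<dots> = contraction th * free_potential (next_theta th) x
      + of_bool (root_free x) / real (b + 1)"
    using proper_root_less[OF x]
    by (simp add: free_potential_def sum.distrib sum_distrib_left sum_divide_distrib[symmetric]
        of_bool_conj sum.delta)
  also have "of_bool (root_free x) / real (b + 1) \<le> free_potential (next_theta th) x / real (b + 1)"
    using root_free_le_free_potential next_theta_bounds(1)[OF th] th
    by (intro divide_right_mono) auto
  finally show ?thesis by (simp add: algebra_simps)
qed

lemma expected_potential_iter:
  assumes x0: "proper x0" and y0: "proper y0" and proj: "proj = fst \<or> proj = snd"
  shows "measure_pmf.expectation (coupled_dist b Q x0 y0 (t + j)) (\<lambda>s. free_potential 0 (proj s))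
     \<le> (\<Prod>i<j. contraction (theta i) + 1 / real (b + 1))
       * measure_pmf.expectation (coupled_dist b Q x0 y0 t) (\<lambda>s. free_potential (theta j) (proj s))"
proof (induction j arbitrary: t)
  case (Suc j)
  let ?D = "coupled_dist b Q x0 y0" and ?c = "contraction (theta j) + 1 / real (b + 1)"
  have c: "0 \<le> ?c" using contraction_pos[OF theta_bounds] by (simp add: add_nonneg_nonneg less_imp_le)
  have P: "0 \<le> (\<Prod>i<j. contraction (theta i) + 1 / real (b + 1))"
    using contraction_pos[OF theta_bounds] by (simp add: prod_nonneg add_nonneg_nonneg less_imp_le)
  have "measure_pmf.expectation (?D (Suc t)) (\<lambda>s. free_potential (theta j) (proj s))
      \<le> measure_pmf.expectation (?D t) (\<lambda>s. ?c * free_potential (theta (Suc j)) (proj s))"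
  proof (rule expectation_coupled_dist_Suc_le[OF x0 y0, where B="real k" and B'="?c * real k"])
    fix x y assume "proper x" "proper y"
    then have "map_pmf proj (coupled_step b Q (x, y)) = glauber_step (proj (x, y))"
      and "proper (proj (x, y))"
      using proj map_coupled_step by auto
    then show "measure_pmf.expectation (coupled_step b Q (x, y)) (\<lambda>s. free_potential (theta j) (proj s))
        \<le> ?c * free_potential (theta (Suc j)) (proj (x, y))"
      using expected_potential_step[OF _ theta_bounds] by (metis integral_map_pmf theta.simps(2))
  qed (use abs_free_potential_le[OF theta_bounds] c
       in \<open>auto simp: abs_mult simp del: theta.simps intro!: mult_left_mono\<close>)
  then have "measure_pmf.expectation (?D (Suc t)) (\<lambda>s. free_potential (theta j) (proj s))
      \<le> ?c * measure_pmf.expectation (?D t) (\<lambda>s. free_potential (theta (Suc j)) (proj s))"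
    by simp
  with Suc.IH[of "Suc t"] P show ?case
    by (auto simp: mult.assoc intro: order_trans mult_left_mono)
qed simp

lemma expectation_root_free_le:
  assumes x0: "proper x0" and y0: "proper y0" and proj: "proj = fst \<or> proj = snd"
    and "L \<le> t"
  shows "measure_pmf.expectation (coupled_dist b Q x0 y0 t) (\<lambda>s. of_bool (root_free (proj s)))
     \<le> real k * (\<Prod>i<L. contraction (theta i) + 1 / real (b + 1))"
proof -
  let ?D = "coupled_dist b Q x0 y0" and ?P = "\<Prod>i<L. contraction (theta i) + 1 / real (b + 1)"
  have P: "0 \<le> ?P"
    using contraction_pos[OF theta_bounds] by (simp add: prod_nonneg add_nonneg_nonneg less_imp_le)
  have "measure_pmf.expectation (?D t) (\<lambda>s. of_bool (root_free (proj s)))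
      \<le> measure_pmf.expectation (?D t) (\<lambda>s. free_potential 0 (proj s))"
    by (rule expectation_mono_on_support[where B=1 and B'="real k"])
       (use abs_free_potential_le[of 0] root_free_le_free_potential[of 0] in auto)
  also have "\<dots> = measure_pmf.expectation (?D ((t - L) + L)) (\<lambda>s. free_potential 0 (proj s))"
    using \<open>L \<le> t\<close> by simp
  also have "\<dots> \<le> ?P * measure_pmf.expectation (?D (t - L)) (\<lambda>s. free_potential (theta L) (proj s))"
    by (rule expected_potential_iter[OF x0 y0 proj])
  also have "\<dots> \<le> ?P * real k"
    using abs_free_potential_le[OF theta_bounds]
    by (intro mult_left_mono[OF _ P] expectation_le_on_support[where B="real k"]) (auto simp: abs_le_iff)
  finally show ?thesis by (simp add: mult.commute)
qed

lemma expectation_either_root_free_le: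
  assumes "proper x0" "proper y0" "L \<le> t"
  shows "measure_pmf.expectation (coupled_dist b Q x0 y0 t) either_root_free
     \<le> 2 * real k * (\<Prod>i<L. contraction (theta i) + 1 / real (b + 1))"
proof -
  let ?D = "coupled_dist b Q x0 y0 t"
  have "measure_pmf.expectation ?D either_root_free
      \<le> measure_pmf.expectation ?D (\<lambda>s. of_bool (root_free (fst s)) + of_bool (root_free (snd s)))"
    by (rule expectation_mono_on_support[where B=1 and B'=2]) auto
  also have "\<dots> = measure_pmf.expectation ?D (\<lambda>s. of_bool (root_free (fst s)))
      + measure_pmf.expectation ?D (\<lambda>s. of_bool (root_free (snd s)))"
    by (rule Bochner_Integration.integral_add) (auto intro: integrable_measure_pmf_bounded[where B=1])
  also have "\<dots> \<le> 2 * real k * (\<Prod>i<L. contraction (theta i) + 1 / real (b + 1))"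
    using expectation_root_free_le[OF assms(1,2) _ assms(3), of fst]
      expectation_root_free_le[OF assms(1,2) _ assms(3), of snd]
    by simp
  finally show ?thesis .
qed

lemma rate_power_le_one_minus_theta:
  "(1 - 1 / (real (b + 1) * (1 - p_leaf))) ^ i \<le> 1 - theta i"
proof (induction i)
  case (Suc i)
  define g where "g = 1 / (real (b + 1) * (1 - p_leaf))"
  have "g \<le> 1"
    using one_le_Suc_mul_one_minus[OF one_le_b p_leaf_le_half] by (simp add: g_def)
  moreover have "(1 - g) ^ i \<le> 1 - theta i" using Suc unfolding g_def .
  ultimately have "(1 - g) ^ Suc i \<le> (1 - theta i) * (1 - g)"
    by (simp add: mult_left_mono mult.commute)
  also have "\<dots> \<le> 1 - theta (Suc i)"
    using next_theta_bounds(3)[OF theta_bounds] by (simp add: g_def)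
  finally show ?case unfolding g_def .
qed simp

lemma contraction_add_le_exp:
  "0 \<le> contraction (theta i) + 1 / real (b + 1)"
  "contraction (theta i) + 1 / real (b + 1)
     \<le> exp (1 / real (b + 1) - real b * p_leaf * (1 / real (b + 1)) * (1 - theta i))"
proof -
  show "0 \<le> contraction (theta i) + 1 / real (b + 1)"
    using contraction_pos[OF theta_bounds, of i] by simp
  have "contraction (theta i) + 1 / real (b + 1)
      = 1 + (1 / real (b + 1) - real b * p_leaf * (1 / real (b + 1)) * (1 - theta i))"
    unfolding contraction_def by simp
  then show "contraction (theta i) + 1 / real (b + 1)
      \<le> exp (1 / real (b + 1) - real b * p_leaf * (1 / real (b + 1)) * (1 - theta i))"
    by (simp only: exp_ge_add_one_self)
qed

lemma contraction_prod_le_exp: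
  "(\<Prod>i<L. contraction (theta i) + 1 / real (b + 1))
     \<le> exp (real L / real (b + 1) - real b * p_leaf * (1 - p_leaf)
            * (1 - (1 - 1 / (real (b + 1) * (1 - p_leaf))) ^ L))"
proof -
  define g where "g = 1 / (real (b + 1) * (1 - p_leaf))"
  define dl where "dl = 1 / real (b + 1)"
  have g: "0 < g" using p_leaf_le_half by (simp add: g_def)
  have "(\<Prod>i<L. contraction (theta i) + dl) \<le> (\<Prod>i<L. exp (dl - real b * p_leaf * dl * (1 - theta i)))"
    unfolding dl_def by (intro prod_mono conjI contraction_add_le_exp)
  also have "\<dots> = exp (real L * dl - real b * p_leaf * dl * (\<Sum>i<L. 1 - theta i))"
    by (simp add: exp_sum[symmetric] sum_subtractf sum_distrib_left[symmetric])
  also have "\<dots> \<le> exp (real L * dl - real b * p_leaf * dl * (\<Sum>i<L. (1 - g) ^ i))"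
    using p_leaf_pos rate_power_le_one_minus_theta
    by (intro exp_mono diff_left_mono mult_left_mono sum_mono) (auto simp: dl_def g_def)
  also have "real b * p_leaf * dl * (\<Sum>i<L. (1 - g) ^ i) = real b * p_leaf * (1 - p_leaf) * (1 - (1 - g) ^ L)"
  proof -
    have "(\<Sum>i<L. (1 - g) ^ i) = (1 - (1 - g) ^ L) / g"
      using g by (simp add: sum_gp_strict)
    moreover have "dl = (1 - p_leaf) * g"
      using p_leaf_le_half by (simp add: dl_def g_def)
    ultimately show ?thesis using g by simp
  qed
  finally show ?thesis by (simp add: dl_def g_def)
qed

lemma prob_swap_event_ge_explicit:
  assumes "proper x0" "proper y0" "L \<le> T"
  shows "measure_pmf.prob (coupled_dist b Q x0 y0 T) (swap_event b)
     \<ge> 1 - (real b / real (b + 1)) ^ (T - L) * real b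
       - real (T - L) * (2 * real k * exp (real L / real (b + 1) - real b * p_leaf * (1 - p_leaf)
            * (1 - (1 - 1 / (real (b + 1) * (1 - p_leaf))) ^ L))) / real (b + 1)"
proof -
  let ?D = "coupled_dist b Q x0 y0"
  let ?S = "\<Sum>i<T - L. measure_pmf.expectation (?D (L + i)) either_root_free"
  have "?S \<le> (\<Sum>i<T - L. 2 * real k * (\<Prod>i<L. contraction (theta i) + 1 / real (b + 1)))"
    using expectation_either_root_free_le[OF assms(1,2)] by (intro sum_mono) simp
  also have "\<dots> \<le> real (T - L) * (2 * real k * exp (real L / real (b + 1) - real b * p_leaf
      * (1 - p_leaf) * (1 - (1 - 1 / (real (b + 1) * (1 - p_leaf))) ^ L)))"
    using contraction_prod_le_exp by (simp add: mult_left_mono)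
  finally have "?S / real (b + 1) \<le> real (T - L) * (2 * real k * exp (real L / real (b + 1)
      - real b * p_leaf * (1 - p_leaf) * (1 - (1 - 1 / (real (b + 1) * (1 - p_leaf))) ^ L)))
      / real (b + 1)"
    by (rule divide_right_mono) simp
  moreover have "L + (T - L) = T" using assms(3) by simp
  then have "measure_pmf.prob (?D T) (swap_event b)
      \<ge> 1 - (real b / real (b + 1)) ^ (T - L) * real b - ?S / real (b + 1)"
    using prob_swap_event_ge[OF assms(1,2), where t=L and j="T - L"] by simp
  ultimately show ?thesis by linarith
qed

end

section \<open>Numerical estimates\<close>

lemma decay_term_le:
  fixes b n :: nat
  assumes b: "1 \<le> b" and n: "real (b + 1) * (2 * ln (real b)) \<le> real n"
  shows "(real b / real (b + 1)) ^ n * real b \<le> 1 / real b"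
proof -
  have "(real b / real (b + 1)) ^ n = (1 - 1 / real (b + 1)) ^ n"
    by (simp add: field_simps)
  also have "\<dots> \<le> exp (- (real n * (1 / real (b + 1))))"
    by (rule one_minus_power_le_exp) simp
  also have "\<dots> \<le> exp (- ln (real b ^ 2))"
    using n b by (simp add: ln_realpow field_simps)
  also have "\<dots> = 1 / real b ^ 2"
    using b by (simp add: exp_minus inverse_eq_divide)
  finally show ?thesis
    using b by (simp add: divide_le_eq power2_eq_square field_simps)
qed

lemma rate_power_le_exp:
  fixes p C :: real and b L :: nat
  assumes b: "1 \<le> b" and p: "0 < p" "p \<le> 1/2" and L: "C * real (b + 1) \<le> real L"
  shows "(1 - 1 / (real (b + 1) * (1 - p))) ^ L \<le> exp (- C)"
proof -
  define g where "g = 1 / (real (b + 1) * (1 - p))"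
  have "real (b + 1) * (1 - p) \<le> real (b + 1) * 1"
    using p by (intro mult_left_mono) auto
  then have g: "1 / real (b + 1) \<le> g" "g \<le> 1"
    using p one_le_Suc_mul_one_minus[OF b p(2)] unfolding g_def by (auto intro: frac_le)
  have "(1 - g) ^ L \<le> exp (- (real L * g))"
    by (rule one_minus_power_le_exp) (use g in simp)
  also have "\<dots> \<le> exp (- C)"
  proof -
    have "C \<le> real L * (1 / real (b + 1))" using L by (simp add: field_simps)
    also have "\<dots> \<le> real L * g" using g(1) by (intro mult_left_mono) auto
    finally show ?thesis by simp
  qed
  finally show ?thesis unfolding g_def .
qed

lemma free_exponent_le:
  fixes \<epsilon> p C :: real and b L :: nat
  assumes \<epsilon>: "0 < \<epsilon>" and b: "1 \<le> b" and p: "0 < p" "p \<le> 1/2"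
    and colours: "(1 + \<epsilon>) * ln (real b) \<le> real b * p"
    and p_small: "p * (1 + 3 * \<epsilon> / 4) \<le> \<epsilon> / 4"
    and C: "exp (- C) = \<epsilon> / (4 * (1 + \<epsilon>))"
    and L: "C * real (b + 1) \<le> real L" "real L \<le> C * real (b + 1) + 1"
  shows "real L / real (b + 1) - real b * p * (1 - p) * (1 - (1 - 1 / (real (b + 1) * (1 - p))) ^ L)
     \<le> C + 1 - (1 + \<epsilon> / 2) * ln (real b)"
proof -
  define g where "g = 1 / (real (b + 1) * (1 - p))"
  define \<eta> where "\<eta> = \<epsilon> / (4 * (1 + \<epsilon>))"
  have lnb: "0 \<le> ln (real b)" using b by simp
  have "(1 - g) ^ L \<le> exp (- C)"
    unfolding g_def by (rule rate_power_le_exp[OF b p L(1)])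
  then have pow: "(1 - g) ^ L \<le> \<eta>" unfolding C \<eta>_def .
  have "(1 - p) * (1 + 3 * \<epsilon> / 4) = (1 + 3 * \<epsilon> / 4) - p * (1 + 3 * \<epsilon> / 4)"
    by (simp add: left_diff_distrib)
  then have "1 + \<epsilon> / 2 \<le> (1 - p) * (1 + 3 * \<epsilon> / 4)"
    using p_small by linarith
  also have "1 + 3 * \<epsilon> / 4 = (1 + \<epsilon>) * (1 - \<eta>)"
    using \<epsilon> unfolding \<eta>_def by (simp add: field_simps)
  finally have "(1 + \<epsilon> / 2) * ln (real b) \<le> (1 - p) * ((1 + \<epsilon>) * (1 - \<eta>)) * ln (real b)"
    using lnb by (intro mult_right_mono)
  also have "\<dots> = ((1 + \<epsilon>) * ln (real b)) * (1 - p) * (1 - \<eta>)"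
    by (simp only: mult_ac)
  also have "\<dots> \<le> (real b * p) * (1 - p) * (1 - (1 - g) ^ L)"
  proof (rule mult_mono)
    show "(1 + \<epsilon>) * ln (real b) * (1 - p) \<le> real b * p * (1 - p)"
      using colours p by (intro mult_right_mono) auto
    show "1 - \<eta> \<le> 1 - (1 - g) ^ L" using pow by simp
    show "0 \<le> 1 - \<eta>" using \<epsilon> unfolding \<eta>_def by (simp add: field_simps)
  qed (use p in simp)
  finally have "(1 + \<epsilon> / 2) * ln (real b) \<le> real b * p * (1 - p) * (1 - (1 - g) ^ L)" .
  moreover have "real L / real (b + 1) \<le> C + 1"
    using L(2) by (simp add: field_simps)
  ultimately show ?thesis unfolding g_def by linarith
qed

lemma free_term_le:
  fixes \<epsilon> C X :: real and b k n :: nat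
  assumes b: "1 \<le> b" and k: "real k * ln (real b) \<le> real b"
    and n: "real n \<le> 9 * real (b + 1) * ln (real b)"
    and X: "X \<le> C + 1 - (1 + \<epsilon> / 2) * ln (real b)"
  shows "real n * (2 * real k * exp X) / real (b + 1) \<le> 18 * exp (C + 1) * real b powr (- \<epsilon> / 2)"
proof -
  have "exp X \<le> exp (C + 1 - (1 + \<epsilon> / 2) * ln (real b))"
    using X by simp
  also have "\<dots> = exp ((C + 1) + (- \<epsilon> / 2) * ln (real b) - ln (real b))"
    by (simp add: algebra_simps)
  also have "\<dots> = exp (C + 1) * real b powr (- \<epsilon> / 2) / real b"
    using b by (simp only: exp_diff exp_add) (simp add: powr_def)
  finally have expX: "exp X \<le> exp (C + 1) * real b powr (- \<epsilon> / 2) / real b" .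
  have "real n * (2 * real k * exp X) / real (b + 1) = real n / real (b + 1) * (2 * real k * exp X)"
    by simp
  also have "\<dots> \<le> (9 * ln (real b)) * (2 * real k * (exp (C + 1) * real b powr (- \<epsilon> / 2) / real b))"
    using n expX b by (intro mult_mono) (auto simp: field_simps)
  also have "\<dots> = 18 * (real k * ln (real b) / real b) * (exp (C + 1) * real b powr (- \<epsilon> / 2))"
    by simp
  also have "\<dots> \<le> 18 * 1 * (exp (C + 1) * real b powr (- \<epsilon> / 2))"
    using k b by (intro mult_right_mono mult_left_mono) auto
  finally show ?thesis by simp
qed

section \<open>Asymptotics\<close>

definition swap_error :: "real \<Rightarrow> nat \<Rightarrow> real" where
  "swap_error \<epsilon> b = 1 / real b + 18 * exp (ln (4 * (1 + \<epsilon>) / \<epsilon>) + 1) * real b powr (- \<epsilon> / 2)"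

lemma one_le_ln_nat: "3 \<le> b \<Longrightarrow> 1 \<le> ln (real b)"
  using exp_le by (simp add: ln_ge_iff)

lemma T_w_minus_nat_ceiling_bounds:
  fixes C :: real and b :: nat
  assumes b: "3 \<le> b" and C: "0 \<le> C" "C + 1 \<le> 6 * ln (real b)"
  defines "L \<equiv> nat \<lceil>C * real (b + 1)\<rceil>"
  shows "L \<le> T_w b"
    and "real (b + 1) * (2 * ln (real b)) \<le> real (T_w b - L)"
    and "real (T_w b - L) \<le> 9 * real (b + 1) * ln (real b)"
proof -
  have lnb: "1 \<le> ln (real b)" using one_le_ln_nat[OF b] .
  have L: "real L \<le> C * real (b + 1) + 1"
    using C(1) real_nat_ceiling_le unfolding L_def by auto
  have "0 \<le> 8 * (real b + 1) * ln (real b)" using lnb by simp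
  then have T: "real (T_w b) \<le> 8 * (real b + 1) * ln (real b) + 1"
    unfolding T_w_def by (rule real_nat_ceiling_le)
  have T': "8 * (real b + 1) * ln (real b) \<le> real (T_w b)"
    unfolding T_w_def by (rule real_nat_ceiling_ge)
  have "real (b + 1) * (C + 1) \<le> real (b + 1) * (6 * ln (real b))"
    using C(2) by (intro mult_left_mono) auto
  then have lower: "real (b + 1) * (2 * ln (real b)) + real L \<le> real (T_w b)"
    using L T' by (simp add: algebra_simps)
  moreover have one_le: "1 \<le> real (b + 1) * ln (real b)"
    using lnb mult_mono[of 1 "real (b + 1)" 1 "ln (real b)"] by simp
  ultimately show LT: "L \<le> T_w b" by simp
  show "real (b + 1) * (2 * ln (real b)) \<le> real (T_w b - L)"
    using lower LT by (simp add: of_nat_diff)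
  have "real (T_w b - L) \<le> real (T_w b)" by simp
  then show "real (T_w b - L) \<le> 9 * real (b + 1) * ln (real b)"
    using T one_le by (simp add: algebra_simps)
qed

lemma prob_swap_event_ge_swap_error:
  fixes \<epsilon> :: real and b k :: nat
  defines "C \<equiv> ln (4 * (1 + \<epsilon>) / \<epsilon>)"
  assumes \<epsilon>: "0 < \<epsilon>" and b: "3 \<le> b" and k: "3 \<le> k"
    and k_le: "real k * ((1 + \<epsilon>) * ln (real b)) \<le> real b"
    and p_small: "1 / real (k - 1) * (1 + 3 * \<epsilon> / 4) \<le> \<epsilon> / 4"
    and C_le: "C + 1 \<le> 6 * ln (real b)"
    and Q: "maximal_coupling_choice b k Q"
    and x0: "proper_coloring b k x0" and y0: "proper_coloring b k y0"
  shows "measure_pmf.prob (coupled_dist b Q x0 y0 (T_w b)) (swap_event b) \<ge> 1 - swap_error \<epsilon> b"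
proof -
  interpret star_coupling b k Q
    using b k Q by unfold_locales auto
  define L where "L = nat \<lceil>C * real (b + 1)\<rceil>"
  have lnb: "1 \<le> ln (real b)" using one_le_ln_nat[OF b] .
  have C: "0 < C" "exp (- C) = \<epsilon> / (4 * (1 + \<epsilon>))"
    using \<epsilon> by (simp_all add: C_def exp_minus field_simps)
  have L: "C * real (b + 1) \<le> real L" "real L \<le> C * real (b + 1) + 1"
    using C(1) real_nat_ceiling_ge real_nat_ceiling_le unfolding L_def by auto
  note T = T_w_minus_nat_ceiling_bounds[OF b less_imp_le[OF C(1)] C_le, folded L_def]
  have colours: "(1 + \<epsilon>) * ln (real b) \<le> real b * p_leaf"
  proof -
    have "(1 + \<epsilon>) * ln (real b) \<le> real b / real k"
      using k_le k by (simp add: field_simps)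
    also have "\<dots> \<le> real b / real (k - 1)"
      using k by (intro divide_left_mono) auto
    finally show ?thesis by (simp add: p_leaf_def)
  qed
  have k_ln: "real k * ln (real b) \<le> real b"
  proof -
    have "0 \<le> real k * ln (real b) * \<epsilon>" using lnb \<epsilon> by simp
    then show ?thesis using k_le by (simp add: algebra_simps)
  qed
  have "(real b / real (b + 1)) ^ (T_w b - L) * real b \<le> 1 / real b"
    using T(2) b by (intro decay_term_le) simp_all
  moreover have "real (T_w b - L) * (2 * real k * exp (real L / real (b + 1)
        - real b * p_leaf * (1 - p_leaf) * (1 - (1 - 1 / (real (b + 1) * (1 - p_leaf))) ^ L)))
        / real (b + 1)
      \<le> 18 * exp (C + 1) * real b powr (- \<epsilon> / 2)"
    using b k_ln T(3) free_exponent_le[OF \<epsilon> _ p_leaf_pos p_leaf_le_half colours _ C(2) L] p_small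
    by (intro free_term_le) (auto simp: p_leaf_def)
  ultimately show ?thesis
    using prob_swap_event_ge_explicit[OF x0 y0 T(1)] unfolding swap_error_def C_def by linarith
qed

lemma swap_error_tendsto_zero:
  assumes "0 < \<epsilon>"
  shows "swap_error \<epsilon> \<longlonglongrightarrow> 0"
proof -
  have "(\<lambda>b. real b powr (- \<epsilon> / 2)) \<longlonglongrightarrow> 0"
    using assms by (intro tendsto_neg_powr filterlim_real_sequentially) simp
  then show ?thesis
    unfolding swap_error_def
    by (intro tendsto_add_zero lim_inverse_n' tendsto_mult_right_zero)
qed

lemma filterlim_num_colors:
  assumes "0 < \<epsilon>"
  shows "filterlim (\<lambda>b. real (num_colors \<epsilon> b)) at_top sequentially"
  using assms unfolding num_colors_def by real_asymp

lemma num_colors_le: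
  assumes "0 < \<epsilon>" "1 \<le> b"
  shows "real (num_colors \<epsilon> b) * ((1 + \<epsilon>) * ln (real b)) \<le> real b"
proof -
  have pos: "0 \<le> (1 + \<epsilon>) * ln (real b)" using assms by simp
  then have "real (num_colors \<epsilon> b) \<le> real b / ((1 + \<epsilon>) * ln (real b))"
    unfolding num_colors_def by (simp add: of_nat_floor)
  then show ?thesis
    using pos by (cases "(1 + \<epsilon>) * ln (real b) = 0") (simp_all add: le_divide_eq)
qed

lemma eventually_star_parameters:
  assumes \<epsilon>: "0 < \<epsilon>"
  shows "eventually (\<lambda>b. 3 \<le> b \<and> 3 \<le> num_colors \<epsilon> b
           \<and> 1 / real (num_colors \<epsilon> b - 1) * (1 + 3 * \<epsilon> / 4) \<le> \<epsilon> / 4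
           \<and> ln (4 * (1 + \<epsilon>) / \<epsilon>) + 1 \<le> 6 * ln (real b)) sequentially"
proof -
  define M where "M = 3 + (4 + 3 * \<epsilon>) / \<epsilon>"
  have "eventually (\<lambda>b. M \<le> real (num_colors \<epsilon> b)) sequentially"
    using filterlim_num_colors[OF \<epsilon>] by (simp add: filterlim_at_top)
  moreover have "eventually (\<lambda>b. (ln (4 * (1 + \<epsilon>) / \<epsilon>) + 1) / 6 \<le> ln (real b)) sequentially"
    using filterlim_at_top[THEN iffD1, OF filterlim_compose[OF ln_at_top filterlim_real_sequentially]]
    by (simp only: o_def)
  moreover have "eventually (\<lambda>b. 3 \<le> b) sequentially"
    by (rule eventually_ge_at_top)
  ultimately show ?thesis
  proof eventually_elim
    case (elim b)
    have "0 \<le> (4 + 3 * \<epsilon>) / \<epsilon>" using \<epsilon> by simp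
    then have "3 \<le> real (num_colors \<epsilon> b)" using elim unfolding M_def by linarith
    then have k: "3 \<le> num_colors \<epsilon> b" "(4 + 3 * \<epsilon>) / \<epsilon> \<le> real (num_colors \<epsilon> b - 1)"
      using elim by (simp_all add: M_def of_nat_diff)
    then have "1 + 3 * \<epsilon> / 4 \<le> \<epsilon> / 4 * real (num_colors \<epsilon> b - 1)"
      using \<epsilon> by (simp add: field_simps)
    then show ?case
      using elim k by (simp add: field_simps)
  qed
qed

lemma eventually_prob_swap_event_ge_swap_error:
  assumes "0 < \<epsilon>"
  shows "\<forall>\<^sub>F b in sequentially. \<forall>Q x0 y0.
           maximal_coupling_choice b (num_colors \<epsilon> b) Q \<longrightarrow>
           proper_coloring b (num_colors \<epsilon> b) x0 \<longrightarrow>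
           proper_coloring b (num_colors \<epsilon> b) y0 \<longrightarrow>
           measure_pmf.prob (coupled_dist b Q x0 y0 (T_w b)) (swap_event b) \<ge> 1 - swap_error \<epsilon> b"
  using eventually_star_parameters[OF assms]
  by eventually_elim (use prob_swap_event_ge_swap_error[OF assms _ _ num_colors_le[OF assms]] in auto)

theorem lemma2:
  fixes \<epsilon> :: real
  assumes "\<epsilon> > 0"
  shows "\<forall>\<delta>>0. \<exists>B. \<forall>b\<ge>B. \<forall>Q x0 y0.
           maximal_coupling_choice b (num_colors \<epsilon> b) Q \<longrightarrow>
           proper_coloring b (num_colors \<epsilon> b) x0 \<longrightarrow>
           proper_coloring b (num_colors \<epsilon> b) y0 \<longrightarrow>
           measure_pmf.prob (coupled_dist b Q x0 y0 (T_w b)) (swap_event b) \<ge> 1 - \<delta>"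
proof (intro allI impI)
  fix \<delta> :: real assume "\<delta> > 0"
  with swap_error_tendsto_zero[OF assms] have "\<forall>\<^sub>F b in sequentially. swap_error \<epsilon> b < \<delta>"
    by (rule order_tendstoD(2))
  with eventually_prob_swap_event_ge_swap_error[OF assms]
  have "\<forall>\<^sub>F b in sequentially. \<forall>Q x0 y0.
           maximal_coupling_choice b (num_colors \<epsilon> b) Q \<longrightarrow>
           proper_coloring b (num_colors \<epsilon> b) x0 \<longrightarrow>
           proper_coloring b (num_colors \<epsilon> b) y0 \<longrightarrow>
           measure_pmf.prob (coupled_dist b Q x0 y0 (T_w b)) (swap_event b) \<ge> 1 - \<delta>"
    by eventually_elim force
  then show "\<exists>B. \<forall>b\<ge>B. \<forall>Q x0 y0.
           maximal_coupling_choice b (num_colors \<epsilon> b) Q \<longrightarrow>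
           proper_coloring b (num_colors \<epsilon> b) x0 \<longrightarrow>
           proper_coloring b (num_colors \<epsilon> b) y0 \<longrightarrow>
           measure_pmf.prob (coupled_dist b Q x0 y0 (T_w b)) (swap_event b) \<ge> 1 - \<delta>"
    by (simp only: eventually_sequentially)
qed

end
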